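(* Let $p,p'$ be POPs of size $k$ and $q,q'$ be POPs of size $l$. If $p\sim p'$ and $q\sim q'$, then $p+q\sim p'+q'$.
   Context: A partially ordered pattern (POP) $p$ of size $k$ is a partial order $\le_p$ on $[k]=\{1,\dots,k\}$. A permutation $\pi=\pi_1\cdots\pi_n$ contains $p$ if there are indices $i_1<\dots<i_k$ with $\pi_{i_j}<\pi_{i_m}$ whenever $j<_p m$; otherwise it avoids $p$. $\mathfrak S_n(p)$ is the set of permutations of $[n]$ avoiding $p$, and $p\sim q$ (Wilf-equivalence) means $|\mathfrak S_n(p)|=|\mathfrak S_n(q)|$ for all $n\ge 1$. For a POP $p$ of size $k$ and a POP $q$ of size $l$, the disjoint sum $p+q$ is the POP of size $k+l$ on $[k+l]$ in which $i\le j$ for $i,j\in[k]$ iff $i\le_p j$, $k+i\le k+j$ for $i,j\in[l]$ iff $i\le_q j$, and no element of $[k]$ is comparable with an element of $[k+1,k+l]$. *)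

theory Defs
  imports "HOL-Combinatorics.Permutations"
begin

definition is_POP :: "nat \<Rightarrow> nat rel \<Rightarrow> bool" where
  "is_POP k p \<longleftrightarrow> p \<subseteq> {1..k} \<times> {1..k} \<and> partial_order_on {1..k} p"

definition contains_pop :: "nat \<Rightarrow> (nat \<Rightarrow> nat) \<Rightarrow> nat \<Rightarrow> nat rel \<Rightarrow> bool" where
  "contains_pop n \<pi> k p \<longleftrightarrow>
     (\<exists>idx :: nat \<Rightarrow> nat. strict_mono_on {1..k} idx \<and> idx ` {1..k} \<subseteq> {1..n} \<and>
        (\<forall>j\<in>{1..k}. \<forall>m\<in>{1..k}. (j, m) \<in> p \<and> j \<noteq> m \<longrightarrow> \<pi> (idx j) < \<pi> (idx m)))"

definition avoiders :: "nat \<Rightarrow> nat \<Rightarrow> nat rel \<Rightarrow> (nat \<Rightarrow> nat) set" where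
  "avoiders n k p = {\<pi>. \<pi> permutes {1..n} \<and> \<not> contains_pop n \<pi> k p}"

definition wilf_equiv :: "nat \<Rightarrow> nat rel \<Rightarrow> nat \<Rightarrow> nat rel \<Rightarrow> bool" where
  "wilf_equiv k p l q \<longleftrightarrow> (\<forall>n\<ge>1. card (avoiders n k p) = card (avoiders n l q))"

definition pop_sum :: "nat \<Rightarrow> nat rel \<Rightarrow> nat rel \<Rightarrow> nat rel" where
  "pop_sum k p q = p \<union> {(k + i, k + j) | i j. (i, j) \<in> q}"

end

theory Submission
  imports Defs "HOL-Library.Sublist" "HOL-Library.Infinite_Set" "HOL-Combinatorics.Multiset_Permutations"
begin

text \<open>Read a permutation \<pi> of [n] as the word \<pi>(1)...\<pi>(n). Whether a word contains a POP depends
  only on the relative order of its letters, so the number of p-avoiding arrangements of any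
  n-element alphabet is a function s_p(n) of n alone. A word contains p + q iff it splits as u v
  with u containing p and v containing q. Taking u to be the shortest prefix containing p, a word
  avoids p + q iff either it avoids p, or it is u v with u minimally containing p and v avoiding q.
  Deleting the last letter shows that an alphabet of b letters has b s_p(b - 1) - s_p(b) minimal
  p-containing arrangements, so the number of (p + q)-avoiders is determined by s_p and s_q.\<close>

definition respects_pop :: "nat \<Rightarrow> nat rel \<Rightarrow> (nat \<Rightarrow> 'a::linorder) \<Rightarrow> bool" where
  "respects_pop k P f \<longleftrightarrow> (\<forall>j\<in>{1..k}. \<forall>m\<in>{1..k}. (j, m) \<in> P \<and> j \<noteq> m \<longrightarrow> f j < f m)"

definition word_contains :: "nat \<Rightarrow> nat rel \<Rightarrow> 'a::linorder list \<Rightarrow> bool" where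
  "word_contains k P xs \<longleftrightarrow> (\<exists>ys. subseq ys xs \<and> length ys = k \<and> respects_pop k P (\<lambda>j. ys ! (j - 1)))"

lemma respects_pop_cong:
  "(\<And>j. j \<in> {1..k} \<Longrightarrow> f j = g j) \<Longrightarrow> respects_pop k P f \<longleftrightarrow> respects_pop k P g"
  unfolding respects_pop_def by simp

lemma respects_pop_comp_strict_mono:
  assumes "strict_mono_on S h" and "f ` {1..k} \<subseteq> S"
  shows "respects_pop k P (h \<circ> f) \<longleftrightarrow> respects_pop k P f"
  using assms unfolding respects_pop_def by (auto simp: strict_mono_on_less image_subset_iff)

lemma respects_pop_pop_sum:
  assumes "P \<subseteq> {1..k} \<times> {1..k}" and "Q \<subseteq> {1..l} \<times> {1..l}"
  shows "respects_pop (k + l) (pop_sum k P Q) f \<longleftrightarrow>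
    respects_pop k P f \<and> respects_pop l Q (\<lambda>i. f (k + i))"
  using assms unfolding respects_pop_def pop_sum_def by (auto 0 3)

lemma set_subseq: "subseq xs ys \<Longrightarrow> set xs \<subseteq> set ys"
  by (metis subseq_conv_nths set_nths_subset)

lemma subseq_map_iff: "subseq ys (map f xs) \<longleftrightarrow> (\<exists>zs. subseq zs xs \<and> ys = map f zs)"
  by (metis subseq_conv_nths nths_map subseq_map)

lemma sorted_wrt_subseq: "subseq xs ys \<Longrightarrow> sorted_wrt R ys \<Longrightarrow> sorted_wrt R xs"
  by (induction rule: list_emb.induct) (auto dest: set_subseq)

lemma word_contains_subseq: "word_contains k P xs \<Longrightarrow> subseq xs ys \<Longrightarrow> word_contains k P ys"
  unfolding word_contains_def using subseq_order.trans by blast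

lemma word_contains_appendI1: "word_contains k P ys \<Longrightarrow> word_contains k P (ys @ zs)"
  by (erule word_contains_subseq) (rule subseq_rev_drop_many, rule subseq_order.refl)

lemma word_contains_appendI2: "word_contains k P zs \<Longrightarrow> word_contains k P (ys @ zs)"
  by (erule word_contains_subseq) (rule subseq_drop_many, rule subseq_order.refl)

lemma word_contains_butlastD: "word_contains k P (butlast xs) \<Longrightarrow> word_contains k P xs"
  by (erule word_contains_subseq) (rule prefix_imp_subseq, rule prefixeq_butlast)

lemma not_word_contains_Nil: "0 < k \<Longrightarrow> \<not> word_contains k P []"
  unfolding word_contains_def by auto

lemma word_contains_map_strict_mono:
  assumes "strict_mono_on (set xs) h"
  shows "word_contains k P (map h xs) \<longleftrightarrow> word_contains k P xs"
proof -
  have "respects_pop k P (\<lambda>j. map h zs ! (j - 1)) \<longleftrightarrow> respects_pop k P (\<lambda>j. zs ! (j - 1))"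
    if "subseq zs xs" and "length zs = k" for zs
  proof -
    have "respects_pop k P (\<lambda>j. map h zs ! (j - 1)) \<longleftrightarrow> respects_pop k P (h \<circ> (\<lambda>j. zs ! (j - 1)))"
      using that(2) by (intro respects_pop_cong) auto
    also have "\<dots> \<longleftrightarrow> respects_pop k P (\<lambda>j. zs ! (j - 1))"
      using assms that
      by (intro respects_pop_comp_strict_mono) (auto intro!: subsetD[OF set_subseq[OF that(1)]])
    finally show ?thesis .
  qed
  then show ?thesis
    unfolding word_contains_def subseq_map_iff by fastforce
qed

lemma word_contains_pop_sum_iff:
  assumes "P \<subseteq> {1..k} \<times> {1..k}" and "Q \<subseteq> {1..l} \<times> {1..l}"
  shows "word_contains (k + l) (pop_sum k P Q) xs \<longleftrightarrow>
    (\<exists>ys zs. xs = ys @ zs \<and> word_contains k P ys \<and> word_contains l Q zs)"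
proof
  assume "word_contains (k + l) (pop_sum k P Q) xs"
  then obtain ws where ws: "subseq ws xs" "length ws = k + l"
    and resp: "respects_pop (k + l) (pop_sum k P Q) (\<lambda>j. ws ! (j - 1))"
    unfolding word_contains_def by blast
  obtain ys zs where xs: "xs = ys @ zs"
    and sub: "subseq (take k ws) ys" "subseq (drop k ws) zs"
    using list_emb_appendD[of "(=)" "take k ws" "drop k ws" xs] ws(1) by auto
  have "respects_pop k P (\<lambda>j. take k ws ! (j - 1))"
    using resp ws(2) unfolding respects_pop_pop_sum[OF assms]
    by (subst respects_pop_cong[where g = "\<lambda>j. ws ! (j - 1)"]) auto
  then have "word_contains k P ys"
    unfolding word_contains_def using sub(1) ws(2) by (intro exI[of _ "take k ws"]) simp
  moreover have "respects_pop l Q (\<lambda>j. drop k ws ! (j - 1))"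
    using resp ws(2) unfolding respects_pop_pop_sum[OF assms]
    by (subst respects_pop_cong[where g = "\<lambda>j. ws ! (k + j - 1)"]) auto
  then have "word_contains l Q zs"
    unfolding word_contains_def using sub(2) ws(2) by (intro exI[of _ "drop k ws"]) simp
  ultimately show "\<exists>ys zs. xs = ys @ zs \<and> word_contains k P ys \<and> word_contains l Q zs"
    using xs by blast
next
  assume "\<exists>ys zs. xs = ys @ zs \<and> word_contains k P ys \<and> word_contains l Q zs"
  then obtain ws1 ws2 ys zs where xs: "xs = ys @ zs"
    and ws1: "subseq ws1 ys" "length ws1 = k" "respects_pop k P (\<lambda>j. ws1 ! (j - 1))"
    and ws2: "subseq ws2 zs" "length ws2 = l" "respects_pop l Q (\<lambda>j. ws2 ! (j - 1))"
    unfolding word_contains_def by blast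
  have "respects_pop k P (\<lambda>j. (ws1 @ ws2) ! (j - 1))"
    using ws1(2,3) by (subst respects_pop_cong[where g = "\<lambda>j. ws1 ! (j - 1)"]) (auto simp: nth_append)
  moreover have "respects_pop l Q (\<lambda>i. (ws1 @ ws2) ! (k + i - 1))"
    using ws1(2) ws2(3) by (subst respects_pop_cong[where g = "\<lambda>j. ws2 ! (j - 1)"]) (auto simp: nth_append)
  ultimately have "respects_pop (k + l) (pop_sum k P Q) (\<lambda>j. (ws1 @ ws2) ! (j - 1))"
    unfolding respects_pop_pop_sum[OF assms] by simp
  then show "word_contains (k + l) (pop_sum k P Q) xs"
    unfolding word_contains_def using xs ws1(1,2) ws2(1,2) list_emb_append_mono by fastforce
qed

lemma contains_pop_iff_word_contains:
  "contains_pop n \<pi> k P \<longleftrightarrow> word_contains k P (map \<pi> [1..<n+1])"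
proof
  assume "contains_pop n \<pi> k P"
  then obtain idx where mono: "strict_mono_on {1..k} idx" and range: "idx ` {1..k} \<subseteq> {1..n}"
    and resp: "respects_pop k P (\<pi> \<circ> idx)"
    unfolding contains_pop_def respects_pop_def by auto
  define zs where "zs = map idx [1..<k+1]"
  have "sorted_wrt (<) zs"
    unfolding zs_def sorted_wrt_map using mono
    by (intro sorted_wrt_mono_rel[OF _ sorted_wrt_upt]) (auto simp: strict_mono_onD)
  moreover have "set zs \<subseteq> set [1..<n+1]"
    unfolding zs_def set_map set_upt using range by (fastforce simp: image_subset_iff)
  ultimately have "subseq zs [1..<n+1]"
    by (intro sorted_subset_imp_subseq) (simp_all del: upt_Suc)
  moreover have "respects_pop k P (\<lambda>j. map \<pi> zs ! (j - 1))"
    using resp by (subst respects_pop_cong[where g = "\<pi> \<circ> idx"]) (auto simp: zs_def simp del: upt_Suc)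
  moreover have "length zs = k"
    by (simp add: zs_def)
  ultimately show "word_contains k P (map \<pi> [1..<n+1])"
    unfolding word_contains_def by (intro exI[of _ "map \<pi> zs"]) (simp add: subseq_map)
next
  assume "word_contains k P (map \<pi> [1..<n+1])"
  then obtain zs where sub: "subseq zs [1..<n+1]" and len: "length zs = k"
    and resp: "respects_pop k P (\<lambda>j. map \<pi> zs ! (j - 1))"
    unfolding word_contains_def subseq_map_iff by auto
  define idx where "idx j = zs ! (j - 1)" for j
  have "sorted_wrt (<) zs"
    using sub by (rule sorted_wrt_subseq) (simp del: upt_Suc)
  then have "strict_mono_on {1..k} idx"
    unfolding idx_def using len by (intro strict_mono_onI) (simp add: sorted_wrt_nth_less)
  moreover have "idx ` {1..k} \<subseteq> {1..n}"
  proof -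
    have "set zs \<subseteq> {1..n}"
      using set_subseq[OF sub] by (simp del: upt_Suc add: atLeastLessThanSuc_atLeastAtMost)
    then show ?thesis
      unfolding idx_def using len by (auto intro!: subsetD[OF _ nth_mem])
  qed
  moreover have "respects_pop k P (\<pi> \<circ> idx)"
    using resp len by (subst respects_pop_cong[where g = "\<lambda>j. map \<pi> zs ! (j - 1)"]) (auto simp: idx_def)
  ultimately show "contains_pop n \<pi> k P"
    unfolding contains_pop_def respects_pop_def by auto
qed

lemma bij_betw_permutes_permutations_of_set:
  assumes "distinct us"
  shows "bij_betw (\<lambda>\<pi>. map \<pi> us) {\<pi>. \<pi> permutes set us} (permutations_of_set (set us))"
proof -
  have inj: "inj_on (\<lambda>\<pi>. map \<pi> us) {\<pi>. \<pi> permutes set us}"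
  proof (rule inj_onI, rule ext)
    fix \<sigma> \<tau> x assume "\<sigma> \<in> {\<pi>. \<pi> permutes set us}" "\<tau> \<in> {\<pi>. \<pi> permutes set us}"
      and "map \<sigma> us = map \<tau> us"
    then show "\<sigma> x = \<tau> x"
      by (cases "x \<in> set us") (auto simp: permutes_not_in)
  qed
  have "(\<lambda>\<pi>. map \<pi> us) ` {\<pi>. \<pi> permutes set us} \<subseteq> permutations_of_set (set us)"
    using assms by (auto simp: permutations_of_set_def distinct_map permutes_inj_on permutes_image)
  moreover have "card ((\<lambda>\<pi>. map \<pi> us) ` {\<pi>. \<pi> permutes set us}) = card (permutations_of_set (set us))"
    using card_image[OF inj] by (simp add: card_permutations)
  ultimately show ?thesis
    using inj by (simp add: bij_betw_def card_subset_eq)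
qed

definition avoiding_words :: "nat \<Rightarrow> nat rel \<Rightarrow> 'a::linorder set \<Rightarrow> 'a list set" where
  "avoiding_words k P A = {xs \<in> permutations_of_set A. \<not> word_contains k P xs}"

definition avoid_count :: "nat \<Rightarrow> nat rel \<Rightarrow> nat \<Rightarrow> nat" where
  "avoid_count k P n = card (avoiding_words k P {..<n})"

lemma card_avoiders: "card (avoiders n k P) = card (avoiding_words k P {1..n})"
proof -
  have "bij_betw (\<lambda>\<pi>. map \<pi> [1..<n+1]) {\<pi>. \<pi> permutes {1..n}} (permutations_of_set {1..n})"
    using bij_betw_permutes_permutations_of_set[of "[1..<n+1]"]
    by (simp add: atLeastLessThanSuc_atLeastAtMost del: upt_Suc)
  then have "bij_betw (\<lambda>\<pi>. map \<pi> [1..<n+1])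
      {\<pi> \<in> {\<pi>. \<pi> permutes {1..n}}. \<not> contains_pop n \<pi> k P} (avoiding_words k P {1..n})"
    unfolding avoiding_words_def by (rule bij_betw_Collect) (simp add: contains_pop_iff_word_contains)
  then show ?thesis
    unfolding avoiders_def by (simp add: bij_betw_same_card)
qed

lemma card_avoiding_words:
  fixes A :: "'a::wellorder set"
  assumes "finite A"
  shows "card (avoiding_words k P A) = avoid_count k P (card A)"
proof -
  obtain h where bij: "bij_betw h {..<card A} A" and mono: "strict_mono_on {..<card A} h"
    using ex_bij_betw_strict_mono_card[OF assms] by blast
  have inj: "inj_on h {..<card A}" and img: "h ` {..<card A} = A"
    using bij by (auto simp: bij_betw_def)
  have "inj_on (map h) (permutations_of_set {..<card A})"
    by (rule inj_on_mapI, rule inj_on_subset[OF inj]) (auto simp: permutations_of_set_def)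
  then have "bij_betw (map h) (permutations_of_set {..<card A}) (permutations_of_set A)"
    unfolding bij_betw_def permutations_of_set_image_inj[OF inj, symmetric] img by simp
  then have "bij_betw (map h) (avoiding_words k P {..<card A}) (avoiding_words k P A)"
    unfolding avoiding_words_def
    using mono by (intro bij_betw_Collect)
      (auto simp: permutations_of_set_def word_contains_map_strict_mono intro: monotone_on_subset)
  then show ?thesis
    unfolding avoid_count_def by (metis bij_betw_same_card)
qed

lemma card_avoiders_eq_avoid_count: "card (avoiders n k P) = avoid_count k P n"
  by (simp add: card_avoiding_words card_avoiders)

lemma avoid_count_0:
  assumes "0 < k"
  shows "avoid_count k P 0 = 1"
proof -
  have "avoiding_words k P {..<0::nat} = {[]}"
    using assms by (auto simp: avoiding_words_def not_word_contains_Nil)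
  then show ?thesis
    by (simp add: avoid_count_def)
qed

lemma wilf_equiv_iff_avoid_count:
  assumes "0 < k" and "0 < l"
  shows "wilf_equiv k P l Q \<longleftrightarrow> avoid_count k P = avoid_count l Q"
proof
  assume wilf: "wilf_equiv k P l Q"
  show "avoid_count k P = avoid_count l Q"
  proof
    fix n
    show "avoid_count k P n = avoid_count l Q n"
      using wilf assms
      by (cases "n = 0") (simp_all add: avoid_count_0 wilf_equiv_def card_avoiders_eq_avoid_count)
  qed
qed (simp add: wilf_equiv_def card_avoiders_eq_avoid_count)

definition minimally_contains :: "nat \<Rightarrow> nat rel \<Rightarrow> 'a::linorder list \<Rightarrow> bool" where
  "minimally_contains k P xs \<longleftrightarrow> word_contains k P xs \<and> \<not> word_contains k P (butlast xs)"

definition minimal_words :: "nat \<Rightarrow> nat rel \<Rightarrow> 'a::linorder set \<Rightarrow> 'a list set" where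
  "minimal_words k P A = {xs \<in> permutations_of_set A. minimally_contains k P xs}"

lemma minimal_prefix_exists:
  assumes "0 < k" and "word_contains k P xs"
  shows "\<exists>ys zs. xs = ys @ zs \<and> minimally_contains k P ys"
  using assms(2)
proof (induction xs rule: rev_induct)
  case Nil
  then show ?case
    using not_word_contains_Nil[OF assms(1)] by blast
next
  case (snoc x xs)
  show ?case
  proof (cases "word_contains k P xs")
    case True
    then obtain ys zs where "xs = ys @ zs" and "minimally_contains k P ys"
      using snoc.IH by blast
    then show ?thesis
      by (intro exI[of _ ys] exI[of _ "zs @ [x]"]) simp
  next
    case False
    then show ?thesis
      using snoc.prems unfolding minimally_contains_def by (intro exI[of _ "xs @ [x]"] exI[of _ "[]"]) simp
  qed
qed

lemma minimal_prefix_unique: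
  assumes "ys1 @ zs1 = ys2 @ zs2"
    and "minimally_contains k P ys1" and "minimally_contains k P ys2"
  shows "ys1 = ys2"
proof -
  have prefix_eq: "ys = ys'"
    if "prefix ys ys'" "minimally_contains k P ys" "minimally_contains k P ys'" for ys ys' :: "'a list"
  proof (rule ccontr)
    assume "ys \<noteq> ys'"
    with that(1) obtain us where "ys' = ys @ us" and "us \<noteq> []"
      by (auto simp: prefix_def)
    then have "prefix ys (butlast ys')"
      by (simp add: butlast_append)
    then show False
      using that(2,3) word_contains_subseq[OF _ prefix_imp_subseq]
      unfolding minimally_contains_def by blast
  qed
  have "prefix ys1 (ys2 @ zs2)" and "prefix ys2 (ys2 @ zs2)"
    using assms(1) by (metis prefixI)+
  then have "prefix ys1 ys2 \<or> prefix ys2 ys1"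
    by (rule prefix_same_cases)
  then show ?thesis
    using prefix_eq assms(2,3) by metis
qed

lemma word_contains_pop_sum_append_minimal:
  assumes "0 < k" and "P \<subseteq> {1..k} \<times> {1..k}" and "Q \<subseteq> {1..l} \<times> {1..l}"
    and "minimally_contains k P ys"
  shows "word_contains (k + l) (pop_sum k P Q) (ys @ zs) \<longleftrightarrow> word_contains l Q zs"
proof
  assume "word_contains (k + l) (pop_sum k P Q) (ys @ zs)"
  then obtain ys' zs' where split: "ys @ zs = ys' @ zs'" "word_contains k P ys'" "word_contains l Q zs'"
    using word_contains_pop_sum_iff[OF assms(2,3)] by blast
  obtain ys'' us where ys': "ys' = ys'' @ us" and "minimally_contains k P ys''"
    using minimal_prefix_exists[OF assms(1) split(2)] by blast
  then have "ys'' = ys"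
    using minimal_prefix_unique[of ys'' "us @ zs'" ys zs] split(1) assms(4) by simp
  then have "zs = us @ zs'"
    using split(1) ys' by simp
  then show "word_contains l Q zs"
    using split(3) by (simp add: word_contains_appendI2)
next
  assume "word_contains l Q zs"
  then show "word_contains (k + l) (pop_sum k P Q) (ys @ zs)"
    using assms(4) word_contains_pop_sum_iff[OF assms(2,3)] unfolding minimally_contains_def by blast
qed

lemma avoiding_words_pop_sum:
  assumes "0 < k" and "P \<subseteq> {1..k} \<times> {1..k}" and "Q \<subseteq> {1..l} \<times> {1..l}"
  shows "avoiding_words (k + l) (pop_sum k P Q) A = avoiding_words k P A \<union>
    (\<lambda>(ys, zs). ys @ zs) ` (\<Union>B\<in>Pow A. minimal_words k P B \<times> avoiding_words l Q (A - B))"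
    (is "?lhs = ?avoid \<union> ?split")
proof (intro equalityI subsetI)
  fix xs assume xs: "xs \<in> ?lhs"
  show "xs \<in> ?avoid \<union> ?split"
  proof (cases "word_contains k P xs")
    case True
    then obtain ys zs where split: "xs = ys @ zs" and min: "minimally_contains k P ys"
      using minimal_prefix_exists[OF assms(1)] by blast
    then have "\<not> word_contains l Q zs"
      using xs word_contains_pop_sum_append_minimal[OF assms min]
      by (simp add: avoiding_words_def)
    then have "(ys, zs) \<in> minimal_words k P (set ys) \<times> avoiding_words l Q (A - set ys)"
      using xs split min by (auto simp: avoiding_words_def minimal_words_def permutations_of_set_def)
    moreover have "set ys \<in> Pow A"
      using xs split by (auto simp: avoiding_words_def permutations_of_set_def)
    ultimately show ?thesis
      using split by blast
  next
    case False
    then show ?thesis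
      using xs by (simp add: avoiding_words_def)
  qed
next
  fix xs assume "xs \<in> ?avoid \<union> ?split"
  then show "xs \<in> ?lhs"
  proof
    assume xs: "xs \<in> ?avoid"
    have "\<not> word_contains (k + l) (pop_sum k P Q) xs"
    proof
      assume "word_contains (k + l) (pop_sum k P Q) xs"
      then obtain ys zs where "xs = ys @ zs" and "word_contains k P ys"
        by (auto simp: word_contains_pop_sum_iff[OF assms(2,3)])
      then have "word_contains k P xs"
        by (simp add: word_contains_appendI1)
      then show False
        using xs by (simp add: avoiding_words_def)
    qed
    then show ?thesis
      using xs by (simp add: avoiding_words_def)
  next
    assume "xs \<in> ?split"
    then obtain B ys zs where "B \<subseteq> A" and xs: "xs = ys @ zs"
      and "ys \<in> minimal_words k P B" and "zs \<in> avoiding_words l Q (A - B)"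
      by (elim imageE UN_E) auto
    then have ys: "distinct ys" "set ys = B" "minimally_contains k P ys"
      and zs: "distinct zs" "set zs = A - B" "\<not> word_contains l Q zs"
      by (simp_all add: avoiding_words_def minimal_words_def permutations_of_set_def)
    then have "xs \<in> permutations_of_set A"
      using \<open>B \<subseteq> A\<close> xs by (auto simp: permutations_of_set_def)
    then show ?thesis
      using word_contains_pop_sum_append_minimal[OF assms ys(3)] xs zs(3)
      by (simp add: avoiding_words_def)
  qed
qed

lemma card_avoiding_words_pop_sum:
  assumes "0 < k" and "P \<subseteq> {1..k} \<times> {1..k}" and "Q \<subseteq> {1..l} \<times> {1..l}" and "finite A"
  shows "card (avoiding_words (k + l) (pop_sum k P Q) A) = card (avoiding_words k P A) +
    (\<Sum>B\<in>Pow A. card (minimal_words k P B) * card (avoiding_words l Q (A - B)))"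
proof -
  let ?S = "\<Union>B\<in>Pow A. minimal_words k P B \<times> avoiding_words l Q (A - B)"
  have finite_words: "finite (avoiding_words k' P' A')" "finite (minimal_words k' P' A')"
    for k' P' and A' :: "'a set"
    by (simp_all add: avoiding_words_def minimal_words_def)
  have minimal_fst: "minimally_contains k P ys" if "(ys, zs) \<in> ?S" for ys zs
    using that by (auto simp: minimal_words_def)
  have "inj_on (\<lambda>(ys, zs). ys @ zs) ?S"
  proof (rule inj_onI)
    fix p p' assume "p \<in> ?S" "p' \<in> ?S" and eq: "(\<lambda>(ys, zs). ys @ zs) p = (\<lambda>(ys, zs). ys @ zs) p'"
    obtain ys zs ys' zs' where p: "p = (ys, zs)" "p' = (ys', zs')"
      by (cases p, cases p')
    have "ys @ zs = ys' @ zs'"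
      using eq p by simp
    moreover have "minimally_contains k P ys" and "minimally_contains k P ys'"
      using minimal_fst \<open>p \<in> ?S\<close> \<open>p' \<in> ?S\<close> p by blast+
    ultimately have "ys = ys'"
      by (rule minimal_prefix_unique)
    then show "p = p'"
      using p \<open>ys @ zs = ys' @ zs'\<close> by simp
  qed
  then have "card ((\<lambda>(ys, zs). ys @ zs) ` ?S) = card ?S"
    by (rule card_image)
  also have "\<dots> = (\<Sum>B\<in>Pow A. card (minimal_words k P B \<times> avoiding_words l Q (A - B)))"
  proof (rule card_UN_disjoint)
    show "finite (Pow A)"
      using assms(4) by simp
    show "\<forall>B\<in>Pow A. finite (minimal_words k P B \<times> avoiding_words l Q (A - B))"
      using finite_words by blast
    show "\<forall>B\<in>Pow A. \<forall>B'\<in>Pow A. B \<noteq> B' \<longrightarrow>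
        (minimal_words k P B \<times> avoiding_words l Q (A - B)) \<inter>
        (minimal_words k P B' \<times> avoiding_words l Q (A - B')) = {}"
      by (auto simp: minimal_words_def permutations_of_set_def)
  qed
  also have "\<dots> = (\<Sum>B\<in>Pow A. card (minimal_words k P B) * card (avoiding_words l Q (A - B)))"
    by (simp add: card_cartesian_product)
  finally have card_split: "card ((\<lambda>(ys, zs). ys @ zs) ` ?S) = \<dots>" .
  have "avoiding_words k P A \<inter> (\<lambda>(ys, zs). ys @ zs) ` ?S = {}"
    using minimal_fst word_contains_appendI1
    by (fastforce simp: avoiding_words_def minimally_contains_def)
  moreover have "finite ((\<lambda>(ys, zs). ys @ zs) ` ?S)"
    using avoiding_words_pop_sum[OF assms(1-3), of A] finite_words(1)[of "k + l" "pop_sum k P Q" A]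
    by simp
  ultimately show ?thesis
    unfolding avoiding_words_pop_sum[OF assms(1-3)] card_split[symmetric]
    by (simp add: card_Un_disjoint finite_words)
qed

lemma card_words_avoiding_butlast:
  fixes A :: "'a::wellorder set"
  assumes "finite A" and "A \<noteq> {}"
  shows "card {xs \<in> permutations_of_set A. \<not> word_contains k P (butlast xs)} =
    card A * avoid_count k P (card A - 1)"
proof -
  let ?U = "{xs \<in> permutations_of_set A. \<not> word_contains k P (butlast xs)}"
  have "bij_betw (\<lambda>xs. (last xs, butlast xs)) ?U (SIGMA x:A. avoiding_words k P (A - {x}))"
  proof (rule bij_betw_byWitness[where f' = "\<lambda>(x, ys). ys @ [x]"])
    have nonempty: "xs \<noteq> []" if "xs \<in> ?U" for xs
      using that assms(2) by (auto simp: permutations_of_set_def)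
    then show "\<forall>xs\<in>?U. (\<lambda>(x, ys). ys @ [x]) (last xs, butlast xs) = xs"
      by simp
    show "\<forall>p\<in>(SIGMA x:A. avoiding_words k P (A - {x})).
        (last ((\<lambda>(x, ys). ys @ [x]) p), butlast ((\<lambda>(x, ys). ys @ [x]) p)) = p"
      by auto
    show "(\<lambda>xs. (last xs, butlast xs)) ` ?U \<subseteq> (SIGMA x:A. avoiding_words k P (A - {x}))"
    proof (rule image_subsetI)
      fix xs assume xs: "xs \<in> ?U"
      then obtain ys x where xs_eq: "xs = ys @ [x]"
        using nonempty rev_exhaust by blast
      then have "distinct (ys @ [x])" and "set (ys @ [x]) = A" and "\<not> word_contains k P ys"
        using xs by (simp_all add: permutations_of_set_def)
      then show "(last xs, butlast xs) \<in> (SIGMA x:A. avoiding_words k P (A - {x}))"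
        unfolding xs_eq by (auto simp: avoiding_words_def permutations_of_set_def)
    qed
    show "(\<lambda>(x, ys). ys @ [x]) ` (SIGMA x:A. avoiding_words k P (A - {x})) \<subseteq> ?U"
    proof (rule image_subsetI)
      fix p assume "p \<in> (SIGMA x:A. avoiding_words k P (A - {x}))"
      then obtain x ys where p: "p = (x, ys)" and "x \<in> A" and "ys \<in> avoiding_words k P (A - {x})"
        by blast
      then have "distinct (ys @ [x])" and "set (ys @ [x]) = A" and "\<not> word_contains k P ys"
        by (auto simp: avoiding_words_def permutations_of_set_def)
      then show "(\<lambda>(x, ys). ys @ [x]) p \<in> ?U"
        unfolding p by (simp add: permutations_of_set_def)
    qed
  qed
  then have "card ?U = card (SIGMA x:A. avoiding_words k P (A - {x}))"
    by (rule bij_betw_same_card)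
  also have "\<dots> = (\<Sum>x\<in>A. card (avoiding_words k P (A - {x})))"
    using assms(1) by (simp add: avoiding_words_def)
  also have "\<dots> = (\<Sum>x\<in>A. avoid_count k P (card A - 1))"
    using assms(1) by (intro sum.cong) (simp_all add: card_avoiding_words)
  finally show ?thesis
    by simp
qed

lemma card_minimal_words:
  fixes A :: "'a::wellorder set"
  assumes "finite A"
  shows "card (minimal_words k P A) = card A * avoid_count k P (card A - 1) - avoid_count k P (card A)"
proof (cases "A = {}")
  case True
  then show ?thesis
    by (simp add: minimal_words_def minimally_contains_def)
next
  case False
  let ?U = "{xs \<in> permutations_of_set A. \<not> word_contains k P (butlast xs)}"
  have "minimal_words k P A = ?U - avoiding_words k P A"
    by (auto simp: minimal_words_def minimally_contains_def avoiding_words_def)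
  moreover have "avoiding_words k P A \<subseteq> ?U"
    by (auto simp: avoiding_words_def dest: word_contains_butlastD)
  ultimately have "card (minimal_words k P A) = card ?U - card (avoiding_words k P A)"
    by (simp add: card_Diff_subset avoiding_words_def)
  then show ?thesis
    using assms False by (simp add: card_words_avoiding_butlast card_avoiding_words)
qed

lemma avoid_count_pop_sum:
  assumes "0 < k" and "P \<subseteq> {1..k} \<times> {1..k}" and "Q \<subseteq> {1..l} \<times> {1..l}"
  shows "avoid_count (k + l) (pop_sum k P Q) n = avoid_count k P n +
    (\<Sum>B\<in>Pow {..<n}. (card B * avoid_count k P (card B - 1) - avoid_count k P (card B)) *
      avoid_count l Q (n - card B))"
proof -
  have "card (minimal_words k P B) * card (avoiding_words l Q ({..<n} - B)) =
      (card B * avoid_count k P (card B - 1) - avoid_count k P (card B)) * avoid_count l Q (n - card B)"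
    if "B \<in> Pow {..<n}" for B
    using that finite_subset[of B "{..<n}"]
    by (simp add: card_minimal_words card_avoiding_words card_Diff_subset)
  then show ?thesis
    unfolding avoid_count_def[of "k + l"]
    by (simp add: card_avoiding_words_pop_sum[OF assms] avoid_count_def[of k P n])
qed

theorem theorem1p4:
  fixes k l :: nat and p p' q q' :: "nat rel"
  assumes "is_POP k p" and "is_POP k p'" and "is_POP l q" and "is_POP l q'"
    and "wilf_equiv k p k p'" and "wilf_equiv l q l q'"
  shows "wilf_equiv (k + l) (pop_sum k p q) (k + l) (pop_sum k p' q')"
proof -
  have ranges: "p \<subseteq> {1..k} \<times> {1..k}" "p' \<subseteq> {1..k} \<times> {1..k}"
    "q \<subseteq> {1..l} \<times> {1..l}" "q' \<subseteq> {1..l} \<times> {1..l}"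
    using assms(1-4) by (simp_all add: is_POP_def)
  consider "k = 0" | "l = 0" | "0 < k" "0 < l"
    by blast
  then show ?thesis
  proof cases
    case 1
    then have "pop_sum k p q = q" and "pop_sum k p' q' = q'"
      using ranges by (auto simp: pop_sum_def)
    then show ?thesis
      using assms(6) 1 by simp
  next
    case 2
    then have "pop_sum k p q = p" and "pop_sum k p' q' = p'"
      using ranges by (auto simp: pop_sum_def)
    then show ?thesis
      using assms(5) 2 by simp
  next
    case 3
    then have "avoid_count k p = avoid_count k p'" and "avoid_count l q = avoid_count l q'"
      using assms(5,6) by (simp_all add: wilf_equiv_iff_avoid_count)
    then show ?thesis
      using 3 ranges by (simp add: wilf_equiv_iff_avoid_count avoid_count_pop_sum fun_eq_iff)
  qed
qed

end
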